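(* Let $G'$ be an inflation of the causal structure $G$. A set $\mathbf{V}\subseteq\mathcal{O}(G')$ of observed nodes of $G'$ is injectable if and only if every two-element subset of $\mathbf{V}$ is injectable. Equivalently, the injectable sets are exactly the cliques of the undirected graph on $\mathcal{O}(G')$ in which two nodes are adjacent iff the pair is injectable.
   Context: A causal structure $G$ is a finite DAG with nodes partitioned into observed $\mathcal{O}(G)$ and latent. $\mathrm{An}_G(\mathbf{X})$ denotes the set of ancestors of $\mathbf{X}$ including $\mathbf{X}$; the ancestral subgraph of $\mathbf{X}$ is the induced subgraph on $\mathrm{An}_G(\mathbf{X})$. Inflation: every node of $G'$ is a copy $X_i$ of a node $X$ of $G$, inheriting observed/latent status; $\mathbf{X}'\sim\mathbf{X}$ means $\mathbf{X}'$ contains exactly one copy of each node of $\mathbf{X}$ and nothing else, and for subgraphs $\sim$ also requires edges to correspond under dropping copy-indices. $G'$ is an inflation of $G$ if $\mathrm{Pa}_{G'}(X_i)\sim\mathrm{Pa}_G(X)$ for every node $X_i$ of $G'$. $\mathbf{V}'\subseteq\mathcal{O}(G')$ is injectable if there is $\mathbf{V}\subseteq\mathcal{O}(G)$ with $\mathbf{V}'\sim\mathbf{V}$ and the ancestral subgraph of $\mathbf{V}'$ in $G'$ $\sim$ the ancestral subgraph of $\mathbf{V}$ in $G$. *)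

theory Defs
  imports Main
begin

text \<open>A causal structure: node set, directed edge set (pairs (parent, child)),
  and the set of observed nodes (all other nodes are latent).\<close>
record 'a causal =
  nodes :: "'a set"
  edges :: "('a \<times> 'a) set"
  observed :: "'a set"

definition causal_structure :: "('a, 'b) causal_scheme \<Rightarrow> bool" where
  "causal_structure G \<longleftrightarrow> finite (nodes G) \<and> edges G \<subseteq> nodes G \<times> nodes G
     \<and> acyclic (edges G) \<and> observed G \<subseteq> nodes G"

definition parents :: "('a, 'b) causal_scheme \<Rightarrow> 'a \<Rightarrow> 'a set" where
  "parents G x = {y. (y, x) \<in> edges G}"

definition ancestors :: "('a, 'b) causal_scheme \<Rightarrow> 'a set \<Rightarrow> 'a set" where
  "ancestors G X = {y. \<exists>x\<in>X. (y, x) \<in> (edges G)\<^sup>*}"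

text \<open>Nodes of an inflation are copies (X, i) of nodes X of G; dropping the
  copy index is \<open>fst\<close>.  \<open>X' \<sim> X\<close> for node sets means \<open>fst\<close> is a bijection X' \<rightarrow> X.\<close>
definition node_corr :: "('a \<times> 'i) set \<Rightarrow> 'a set \<Rightarrow> bool" where
  "node_corr X' X \<longleftrightarrow> bij_betw fst X' X"

definition subgraph_corr ::
  "(('a \<times> 'i), 'c) causal_scheme \<Rightarrow> ('a \<times> 'i) set \<Rightarrow> ('a, 'b) causal_scheme \<Rightarrow> 'a set \<Rightarrow> bool" where
  "subgraph_corr G' A G B \<longleftrightarrow> node_corr A B \<and>
     (\<forall>a\<in>A. \<forall>b\<in>A. (a, b) \<in> edges G' \<longleftrightarrow> (fst a, fst b) \<in> edges G)"

definition inflation ::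
  "('a, 'b) causal_scheme \<Rightarrow> (('a \<times> 'i), 'c) causal_scheme \<Rightarrow> bool" where
  "inflation G G' \<longleftrightarrow> causal_structure G' \<and>
     (\<forall>v\<in>nodes G'. fst v \<in> nodes G \<and> (v \<in> observed G' \<longleftrightarrow> fst v \<in> observed G)
        \<and> node_corr (parents G' v) (parents G (fst v)))"

definition injectable ::
  "('a, 'b) causal_scheme \<Rightarrow> (('a \<times> 'i), 'c) causal_scheme \<Rightarrow> ('a \<times> 'i) set \<Rightarrow> bool" where
  "injectable G G' V' \<longleftrightarrow> V' \<subseteq> observed G' \<and>
     (\<exists>V. V \<subseteq> observed G \<and> node_corr V' V \<and>
          subgraph_corr G' (ancestors G' V') G (ancestors G V))"

end

theory Submission
  imports Defs
begin

text \<open>In an inflation every node has exactly one parent copy for each parent of the original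
  node, so directed paths of \<open>G\<close> lift to paths of \<open>G'\<close> ending at any prescribed copy of their
  endpoint, and paths of \<open>G'\<close> project to paths of \<open>G\<close>.  Hence dropping copy indices maps the
  ancestral set of \<open>V\<close> in \<open>G'\<close> onto that of its projection in \<open>G\<close>, and edges correspond
  automatically; so \<open>V\<close> is injectable exactly when \<open>fst\<close> is injective on its ancestral set.
  That set is the union of the ancestral sets of the single nodes of \<open>V\<close>, and a map is
  injective on a union iff it is injective on the union of any two of the pieces.\<close>

lemma ancestors_subset_nodes:
  assumes "causal_structure G" "X \<subseteq> nodes G"
  shows "ancestors G X \<subseteq> nodes G"
proof
  fix y assume "y \<in> ancestors G X"
  then obtain x where "(y, x) \<in> (edges G)\<^sup>*" "x \<in> nodes G"
    using assms(2) unfolding ancestors_def by blast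
  then show "y \<in> nodes G"
  proof (induction rule: converse_rtrancl_induct)
    case base then show ?case .
  next
    case (step y z)
    then show ?case using assms(1) unfolding causal_structure_def by blast
  qed
qed

lemma subset_ancestors: "X \<subseteq> ancestors G X"
  unfolding ancestors_def by blast

lemma ancestors_UN_singleton: "ancestors G X = (\<Union>x\<in>X. ancestors G {x})"
  unfolding ancestors_def by blast

lemma edge_into_ancestors:
  "(a, b) \<in> edges G \<Longrightarrow> b \<in> ancestors G X \<Longrightarrow> a \<in> ancestors G X"
  unfolding ancestors_def by (blast intro: converse_rtrancl_into_rtrancl)

lemma inflation_parents_image:
  assumes "inflation G G'" "b \<in> nodes G'"
  shows "fst ` parents G' b = parents G (fst b)"
  using assms unfolding inflation_def node_corr_def bij_betw_def by blast

lemma inflation_edge_project: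
  assumes "inflation G G'" "(a, b) \<in> edges G'"
  shows "(fst a, fst b) \<in> edges G"
proof -
  have "b \<in> nodes G'"
    using assms unfolding inflation_def causal_structure_def by blast
  moreover have "fst a \<in> fst ` parents G' b" using assms(2) by (simp add: parents_def)
  ultimately show ?thesis
    using inflation_parents_image[OF assms(1)] by (simp add: parents_def)
qed

lemma inflation_edge_lift:
  assumes "inflation G G'" "b \<in> nodes G'" "(u, fst b) \<in> edges G"
  obtains a where "(a, b) \<in> edges G'" "fst a = u"
proof -
  have "u \<in> fst ` parents G' b"
    using inflation_parents_image[OF assms(1,2)] assms(3) by (simp add: parents_def)
  then show ?thesis using that by (auto simp: parents_def)
qed

lemma inflation_path_project:
  assumes "inflation G G'" "(y, x) \<in> (edges G')\<^sup>*"
  shows "(fst y, fst x) \<in> (edges G)\<^sup>*"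
  using assms(2)
  by (induction rule: rtrancl_induct)
     (auto intro: rtrancl_into_rtrancl inflation_edge_project[OF assms(1)])

lemma inflation_path_lift:
  assumes inf: "inflation G G'" and "(u, fst x) \<in> (edges G)\<^sup>*" and "x \<in> nodes G'"
  obtains y where "fst y = u" "(y, x) \<in> (edges G')\<^sup>*"
proof -
  have "\<exists>y. fst y = u \<and> (y, x) \<in> (edges G')\<^sup>*"
    if "(u, w) \<in> (edges G)\<^sup>*" "x \<in> nodes G'" "fst x = w" for w x
    using that
  proof (induction arbitrary: x rule: converse_rtrancl_induct)
    case base then show ?case by blast
  next
    case (step u v)
    then obtain y where y: "fst y = v" "(y, x) \<in> (edges G')\<^sup>*" by blast
    have "y \<in> nodes G'"
      using ancestors_subset_nodes[of G' "{x}"] inf step.prems y(2)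
      unfolding inflation_def ancestors_def by blast
    with step.hyps(1) y(1) obtain z where "(z, y) \<in> edges G'" "fst z = u"
      using inflation_edge_lift[OF inf] by metis
    then show ?case using y(2) by (blast intro: converse_rtrancl_into_rtrancl)
  qed
  then show ?thesis using assms(2,3) that by blast
qed

lemma inflation_fst_ancestors:
  assumes inf: "inflation G G'" and "X \<subseteq> nodes G'"
  shows "fst ` ancestors G' X = ancestors G (fst ` X)"
proof
  show "fst ` ancestors G' X \<subseteq> ancestors G (fst ` X)"
    using inflation_path_project[OF inf] unfolding ancestors_def by blast
next
  show "ancestors G (fst ` X) \<subseteq> fst ` ancestors G' X"
  proof
    fix u assume "u \<in> ancestors G (fst ` X)"
    then obtain x where "x \<in> X" "(u, fst x) \<in> (edges G)\<^sup>*"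
      unfolding ancestors_def by blast
    with assms(2) inflation_path_lift[OF inf] obtain y where "fst y = u" "(y, x) \<in> (edges G')\<^sup>*"
      by blast
    then show "u \<in> fst ` ancestors G' X" using \<open>x \<in> X\<close> unfolding ancestors_def by blast
  qed
qed

text \<open>Injectivity of \<open>fst\<close> alone already forces edges to correspond: a copy of a parent of
  \<open>fst b\<close> in \<open>parents G' b\<close> is itself an ancestor, so it must be \<open>a\<close>.\<close>

lemma inflation_edges_correspond:
  assumes inf: "inflation G G'" and inj: "inj_on fst (ancestors G' X)"
    and a: "a \<in> ancestors G' X" and b: "b \<in> ancestors G' X" and "b \<in> nodes G'"
  shows "(a, b) \<in> edges G' \<longleftrightarrow> (fst a, fst b) \<in> edges G"
proof
  assume "(a, b) \<in> edges G'"
  then show "(fst a, fst b) \<in> edges G" by (rule inflation_edge_project[OF inf])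
next
  assume "(fst a, fst b) \<in> edges G"
  with inflation_edge_lift[OF inf \<open>b \<in> nodes G'\<close>]
  obtain c where c: "(c, b) \<in> edges G'" "fst c = fst a" by metis
  have "c \<in> ancestors G' X" using c(1) b by (rule edge_into_ancestors)
  with inj a c(2) have "c = a" by (meson inj_onD)
  with c(1) show "(a, b) \<in> edges G'" by simp
qed

lemma injectable_iff_inj_on_ancestors:
  assumes inf: "inflation G G'" and V: "V \<subseteq> observed G'"
  shows "injectable G G' V \<longleftrightarrow> inj_on fst (ancestors G' V)"
proof
  assume "injectable G G' V"
  then show "inj_on fst (ancestors G' V)"
    unfolding injectable_def subgraph_corr_def node_corr_def bij_betw_def by blast
next
  assume inj: "inj_on fst (ancestors G' V)"
  have G': "causal_structure G'" using inf unfolding inflation_def by blast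
  have V_nodes: "V \<subseteq> nodes G'" using V G' unfolding causal_structure_def by blast
  have An_nodes: "ancestors G' V \<subseteq> nodes G'"
    using ancestors_subset_nodes[OF G' V_nodes] .
  have "fst ` V \<subseteq> observed G" using V V_nodes inf unfolding inflation_def by blast
  moreover have "node_corr V (fst ` V)"
    using inj_on_subset[OF inj subset_ancestors] by (simp add: node_corr_def bij_betw_def)
  moreover have "node_corr (ancestors G' V) (ancestors G (fst ` V))"
    using inj inflation_fst_ancestors[OF inf V_nodes] by (simp add: node_corr_def bij_betw_def)
  moreover have "\<forall>a\<in>ancestors G' V. \<forall>b\<in>ancestors G' V. (a, b) \<in> edges G' \<longleftrightarrow> (fst a, fst b) \<in> edges G"
    using inflation_edges_correspond[OF inf inj] An_nodes by blast
  ultimately show "injectable G G' V"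
    unfolding injectable_def subgraph_corr_def using V by blast
qed

lemma inj_on_UN_iff_pairwise:
  "inj_on f (\<Union>i\<in>I. A i) \<longleftrightarrow> (\<forall>i\<in>I. \<forall>j\<in>I. inj_on f (A i \<union> A j))"
proof
  assume "inj_on f (\<Union>i\<in>I. A i)"
  then show "\<forall>i\<in>I. \<forall>j\<in>I. inj_on f (A i \<union> A j)"
    by (blast intro: inj_on_subset)
next
  assume pairwise: "\<forall>i\<in>I. \<forall>j\<in>I. inj_on f (A i \<union> A j)"
  show "inj_on f (\<Union>i\<in>I. A i)"
  proof (rule inj_onI)
    fix x y assume "x \<in> (\<Union>i\<in>I. A i)" "y \<in> (\<Union>i\<in>I. A i)" "f x = f y"
    then obtain i j where "i \<in> I" "j \<in> I" "x \<in> A i \<union> A j" "y \<in> A i \<union> A j" by blast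
    with pairwise \<open>f x = f y\<close> show "x = y" by (meson inj_onD)
  qed
qed

theorem mainTheorem4:
  fixes G :: "'a causal" and G' :: "('a \<times> nat) causal" and V :: "('a \<times> nat) set"
  assumes "causal_structure G"
    and "inflation G G'"
    and "V \<subseteq> observed G'"
  shows "injectable G G' V \<longleftrightarrow> (\<forall>a\<in>V. \<forall>b\<in>V. injectable G G' {a, b})"
proof -
  have pair_ancestors: "ancestors G' {a, b} = ancestors G' {a} \<union> ancestors G' {b}" for a b
    using ancestors_UN_singleton[of G' "{a, b}"] by simp
  have "injectable G G' {a, b} \<longleftrightarrow> inj_on fst (ancestors G' {a} \<union> ancestors G' {b})"
    if "a \<in> V" "b \<in> V" for a b
  proof -
    have "{a, b} \<subseteq> observed G'" using that assms(3) by blast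
    then show ?thesis
      using injectable_iff_inj_on_ancestors[OF assms(2)] pair_ancestors by simp
  qed
  moreover have "injectable G G' V \<longleftrightarrow> inj_on fst (\<Union>v\<in>V. ancestors G' {v})"
    using injectable_iff_inj_on_ancestors[OF assms(2,3)] ancestors_UN_singleton by metis
  ultimately show ?thesis
    by (simp add: inj_on_UN_iff_pairwise)
qed

end
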